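(* For all $b,b'\in\overline{\mathbb{Q}}\setminus\{0,1\}$ and any choices of nonzero logarithms $\ln b,\ln b'$ used to define $b^x$ and $b'^x$, one has $EL^{(b)}=EL^{(b')}$.
   Context: For $b\in\mathbb{C}\setminus\{0,1\}$ fix a value $\ln b$ (nonzero) of the logarithm and define $b^x:=e^{x\ln b}$. For $S\subseteq\mathbb{C}$ let $b^{S}=\{b^x:x\in S\}$ and $\mathrm{Log}_b(S)=\{w: b^w\in S\}$. $\overline{F}$ is the algebraic closure in $\mathbb{C}$ of a field $F$; $\overline{\mathbb{Q}}$ is the field of algebraic numbers. Define $EL_0:=\mathbb{Q}$, $EL_n:=\overline{EL_{n-1}\big(b^{EL_{n-1}},\mathrm{Log}_b(EL_{n-1})\big)}$, $EL^{(b)}:=\bigcup_{n\ge0}EL_n$; equivalently the smallest algebraically closed subfield $F\subseteq\mathbb{C}$ with $x\in F\iff b^x\in F$. *)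

theory Defs
  imports Complex_Main "HOL-Computational_Algebra.Polynomial"
begin

definition subfield_C :: "complex set \<Rightarrow> bool" where
  "subfield_C F \<longleftrightarrow> 0 \<in> F \<and> 1 \<in> F \<and>
     (\<forall>x\<in>F. \<forall>y\<in>F. x + y \<in> F \<and> x - y \<in> F \<and> x * y \<in> F) \<and>
     (\<forall>x\<in>F. x \<noteq> 0 \<longrightarrow> inverse x \<in> F)"

definition field_gen :: "complex set \<Rightarrow> complex set" where
  "field_gen S = \<Inter>{F. subfield_C F \<and> S \<subseteq> F}"

definition alg_closure_C :: "complex set \<Rightarrow> complex set" where
  "alg_closure_C F = {z. \<exists>p :: complex poly. p \<noteq> 0 \<and> (\<forall>i. coeff p i \<in> F) \<and> poly p z = 0}"

text \<open>Exponentiation with base b, where L is the fixed value of ln b: b^x = e^(x L).\<close>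
definition bpow :: "complex \<Rightarrow> complex \<Rightarrow> complex" where
  "bpow L x = exp (x * L)"

definition bpow_set :: "complex \<Rightarrow> complex set \<Rightarrow> complex set" where
  "bpow_set L S = bpow L ` S"

definition Log_set :: "complex \<Rightarrow> complex set \<Rightarrow> complex set" where
  "Log_set L S = {w. bpow L w \<in> S}"

fun EL_n :: "complex \<Rightarrow> nat \<Rightarrow> complex set" where
  "EL_n L 0 = \<rat>"
| "EL_n L (Suc n) = alg_closure_C (field_gen (EL_n L n \<union> bpow_set L (EL_n L n) \<union> Log_set L (EL_n L n)))"

definition EL :: "complex \<Rightarrow> complex set" where
  "EL L = (\<Union>n. EL_n L n)"

end

theory Submission
  imports Defs
begin

text \<open>
  EL(L) is the least algebraically closed subfield of the complex numbers with
  x \<in> F \<longleftrightarrow> exp (x L) \<in> F. For another logarithm L', put c = L / L'. Then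
  exp (c L') = exp L is algebraic, so it lies in EL(L'), hence so does c.
  As exp (x L) = exp ((c x) L') and EL(L') is a field containing c \<noteq> 0,
  EL(L') is closed under x \<mapsto> exp (x L) and its inverse, and minimality gives
  EL(L) \<subseteq> EL(L'). The argument is symmetric.
\<close>

lemma subfield_field_gen: "subfield_C (field_gen S)"
  unfolding field_gen_def subfield_C_def by auto

lemma field_gen_superset: "S \<subseteq> field_gen S"
  unfolding field_gen_def by auto

lemma field_gen_least: "subfield_C F \<Longrightarrow> S \<subseteq> F \<Longrightarrow> field_gen S \<subseteq> F"
  unfolding field_gen_def by auto

lemma alg_closure_C_superset:
  assumes "subfield_C F"
  shows "F \<subseteq> alg_closure_C F"
proof
  fix z assume "z \<in> F"
  then have "coeff [:-z, 1:] i \<in> F" for i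
    using assms unfolding subfield_C_def by (cases i) (auto simp: coeff_pCons split: nat.split)
  moreover have "[:-z, 1:] \<noteq> 0" and "poly [:-z, 1:] z = 0"
    by simp_all
  ultimately show "z \<in> alg_closure_C F"
    unfolding alg_closure_C_def by blast
qed

lemma alg_closure_C_mono: "A \<subseteq> B \<Longrightarrow> alg_closure_C A \<subseteq> alg_closure_C B"
  unfolding alg_closure_C_def by blast

abbreviation EL_gen :: "complex \<Rightarrow> complex set \<Rightarrow> complex set" where
  "EL_gen L S \<equiv> field_gen (S \<union> bpow_set L S \<union> Log_set L S)"

lemma EL_gen_superset: "S \<union> bpow_set L S \<union> Log_set L S \<subseteq> EL_gen L S"
  by (rule field_gen_superset)

lemma EL_n_Suc_eq: "EL_n L (Suc k) = alg_closure_C (EL_gen L (EL_n L k))"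
  by (simp only: EL_n.simps)

lemma EL_gen_subset_EL_n_Suc: "EL_gen L (EL_n L k) \<subseteq> EL_n L (Suc k)"
  unfolding EL_n_Suc_eq by (rule alg_closure_C_superset[OF subfield_field_gen])

lemma EL_n_subset_EL_gen: "EL_n L k \<subseteq> EL_gen L (EL_n L k)"
  using EL_gen_superset[of "EL_n L k" L] by blast

lemma EL_n_subset_Suc: "EL_n L k \<subseteq> EL_n L (Suc k)"
  using EL_n_subset_EL_gen EL_gen_subset_EL_n_Suc by (rule subset_trans)

lemma EL_n_mono: "k \<le> m \<Longrightarrow> EL_n L k \<subseteq> EL_n L m"
  by (rule lift_Suc_mono_le[of "EL_n L", OF EL_n_subset_Suc])

lemma EL_n_subset_EL: "EL_n L k \<subseteq> EL L"
  unfolding EL_def by blast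

lemma finite_subset_EL_n:
  assumes "finite A" and "A \<subseteq> EL L"
  shows "\<exists>k. A \<subseteq> EL_n L k"
  using assms
proof (induction A rule: finite_induct)
  case empty
  then show ?case by blast
next
  case (insert x A)
  then obtain k j where "A \<subseteq> EL_n L k" and "x \<in> EL_n L j"
    unfolding EL_def by blast
  then have "insert x A \<subseteq> EL_n L (max k j)"
    using EL_n_mono[of k "max k j" L] EL_n_mono[of j "max k j" L] by auto
  then show ?case by blast
qed

lemma EL_gen_subset_EL: "EL_gen L (EL_n L k) \<subseteq> EL L"
  using EL_gen_subset_EL_n_Suc EL_n_subset_EL by blast

lemma EL_subfield: "subfield_C (EL L)"
proof -
  have "0 \<in> EL L" "1 \<in> EL L"
    using EL_n_subset_EL[of L 0] by auto
  moreover have "x + y \<in> EL L \<and> x - y \<in> EL L \<and> x * y \<in> EL L \<and>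
      (x \<noteq> 0 \<longrightarrow> inverse x \<in> EL L)"
    if "x \<in> EL L" and "y \<in> EL L" for x y
  proof -
    have "{x, y} \<subseteq> EL L"
      using that by blast
    then obtain k where "{x, y} \<subseteq> EL_n L k"
      using finite_subset_EL_n[of "{x, y}" L] by blast
    then have "x \<in> EL_gen L (EL_n L k)" "y \<in> EL_gen L (EL_n L k)"
      using EL_n_subset_EL_gen by auto
    moreover have "subfield_C (EL_gen L (EL_n L k))"
      by (rule subfield_field_gen)
    ultimately show ?thesis
      using EL_gen_subset_EL[of L k] unfolding subfield_C_def by blast
  qed
  ultimately show ?thesis
    unfolding subfield_C_def by blast
qed

lemma bpow_in_EL:
  assumes "x \<in> EL L"
  shows "bpow L x \<in> EL L"
proof -
  obtain k where "x \<in> EL_n L k"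
    using assms unfolding EL_def by blast
  then have "bpow L x \<in> bpow_set L (EL_n L k)"
    unfolding bpow_set_def by blast
  then show ?thesis
    using EL_gen_superset[of "EL_n L k" L] EL_gen_subset_EL[of L k] by blast
qed

lemma in_EL_if_bpow_in_EL:
  assumes "bpow L w \<in> EL L"
  shows "w \<in> EL L"
proof -
  obtain k where "bpow L w \<in> EL_n L k"
    using assms unfolding EL_def by blast
  then have "w \<in> Log_set L (EL_n L k)"
    unfolding Log_set_def by blast
  then show ?thesis
    using EL_gen_superset[of "EL_n L k" L] EL_gen_subset_EL[of L k] by blast
qed

lemma EL_alg_closed: "alg_closure_C (EL L) \<subseteq> EL L"
proof
  fix z assume "z \<in> alg_closure_C (EL L)"
  then obtain p where p: "p \<noteq> 0" "\<forall>i. coeff p i \<in> EL L" "poly p z = 0"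
    unfolding alg_closure_C_def by blast
  obtain k where k: "coeff p ` {..degree p} \<subseteq> EL_n L k"
    using finite_subset_EL_n[of "coeff p ` {..degree p}" L] p(2) by blast
  have "0 \<in> EL_n L k"
    using EL_n_mono[of 0 k L] by auto
  then have "coeff p i \<in> EL_n L k" for i
    using k by (cases "i \<le> degree p") (auto simp: coeff_eq_0)
  then have "z \<in> alg_closure_C (EL_gen L (EL_n L k))"
    using p EL_n_subset_EL_gen unfolding alg_closure_C_def by blast
  then show "z \<in> EL L"
    using EL_n_subset_EL[of L "Suc k"] by auto
qed

lemma EL_least:
  assumes "subfield_C F" and "alg_closure_C F \<subseteq> F" and "\<rat> \<subseteq> F"
    and "\<And>x. x \<in> F \<Longrightarrow> bpow L x \<in> F"
    and "\<And>w. bpow L w \<in> F \<Longrightarrow> w \<in> F"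
  shows "EL L \<subseteq> F"
proof -
  have "EL_n L n \<subseteq> F" for n
  proof (induction n)
    case 0
    then show ?case using assms(3) by simp
  next
    case (Suc n)
    then have "EL_gen L (EL_n L n) \<subseteq> F"
      using assms(4,5) unfolding bpow_set_def Log_set_def
      by (intro field_gen_least[OF assms(1)]) blast
    then show ?case
      using alg_closure_C_mono assms(2) unfolding EL_n_Suc_eq by blast
  qed
  then show ?thesis
    unfolding EL_def by blast
qed

lemma algebraic_in_EL:
  assumes "algebraic z"
  shows "z \<in> EL L"
proof -
  obtain p where p: "\<forall>i. coeff p i \<in> \<int>" "p \<noteq> 0" "poly p z = 0"
    using assms unfolding algebraic_def by blast
  then have "\<forall>i. coeff p i \<in> EL_gen L (EL_n L 0)"
    using EL_n_subset_EL_gen[of L 0] Ints_subset_Rats by auto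
  then have "z \<in> EL_n L 1"
    using p by (auto simp: alg_closure_C_def)
  then show ?thesis
    using EL_n_subset_EL by blast
qed

lemma bpow_rescale: "L' \<noteq> 0 \<Longrightarrow> bpow L' (L / L' * x) = bpow L x"
  unfolding bpow_def by (simp add: mult.commute)

lemma EL_subset_if_ratio_in_EL:
  assumes "L \<noteq> 0" and "L' \<noteq> 0" and "L / L' \<in> EL L'"
  shows "EL L \<subseteq> EL L'"
proof (rule EL_least)
  let ?c = "L / L'"
  have field: "subfield_C (EL L')"
    by (rule EL_subfield)
  have "?c \<noteq> 0"
    using assms(1,2) by simp
  show "subfield_C (EL L')" "alg_closure_C (EL L') \<subseteq> EL L'"
    by (fact field, rule EL_alg_closed)
  show "\<rat> \<subseteq> EL L'"
    using EL_n_subset_EL[of L' 0] by simp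
  show "bpow L x \<in> EL L'" if "x \<in> EL L'" for x
  proof -
    have "?c * x \<in> EL L'"
      using field assms(3) that unfolding subfield_C_def by blast
    then show ?thesis
      using bpow_in_EL bpow_rescale[OF assms(2)] by metis
  qed
  show "w \<in> EL L'" if "bpow L w \<in> EL L'" for w
  proof -
    have "?c * w \<in> EL L'"
      using that bpow_rescale[OF assms(2)] in_EL_if_bpow_in_EL by metis
    moreover have "inverse ?c \<in> EL L'"
      using field assms(3) \<open>?c \<noteq> 0\<close> unfolding subfield_C_def by blast
    ultimately have "inverse ?c * (?c * w) \<in> EL L'"
      using field unfolding subfield_C_def by blast
    then show ?thesis
      using assms(1,2) by simp
  qed
qed

lemma EL_subset_if_algebraic:
  assumes "L \<noteq> 0" and "L' \<noteq> 0" and "algebraic (exp L)"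
  shows "EL L \<subseteq> EL L'"
proof (rule EL_subset_if_ratio_in_EL[OF assms(1,2)])
  have "bpow L' (L / L') = exp L"
    using bpow_rescale[OF assms(2), of L 1] by (simp add: bpow_def)
  then show "L / L' \<in> EL L'"
    using in_EL_if_bpow_in_EL algebraic_in_EL[OF assms(3)] by metis
qed

theorem mainTheorem3:
  fixes b b' L L' :: complex
  assumes "algebraic b" and "b \<noteq> 0" and "b \<noteq> 1"
      and "algebraic b'" and "b' \<noteq> 0" and "b' \<noteq> 1"
      and "L \<noteq> 0" and "exp L = b"
      and "L' \<noteq> 0" and "exp L' = b'"
  shows "EL L = EL L'"
  using EL_subset_if_algebraic[of L L'] EL_subset_if_algebraic[of L' L] assms by blast

end
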